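(* Let $(A,B)$ be a Katsura pair such that $A$ has no zero rows, and let $(\mathbb{Z}\times E_A^0,E_A)$ be the associated action-restriction pair. Then its contraction coefficient is $$\rho=\limsup_{n\to\infty}\left(\max_{\mu\in E_A^n}\frac{|B_\mu|}{A_\mu}\right)^{1/n}.$$
   Context: Katsura pair: $N\in\mathbb{N}$, $A\in M_N(\mathbb{N})$ (nonnegative integers), $B\in M_N(\mathbb{Z})$ with $A_{ij}=0\Rightarrow B_{ij}=0$. Graph $E_A$: vertices $\{1,\dots,N\}$, edges $e_{i,j,m}$ ($0\le m<A_{ij}$), $r=i$, $s=j$; $E_A^n$ paths $\mu_1\cdots\mu_n$ of length $n$ with $s(\mu_t)=r(\mu_{t+1})$. For $\mu=e_{i_0,i_1,r_1}\cdots e_{i_{n-1},i_n,r_n}$, $A_\mu=\prod_tA_{i_ti_{t+1}}$, $B_\mu=\prod_tB_{i_ti_{t+1}}$. The action-restriction pair $(\mathbb{Z}\times E_A^0,E_A)$: the group bundle with elements $a_i^k$ ($a_i^ka_i^l=a_i^{k+l}$, domain = codomain $=i$) acts by $a_i^k\cdot e_{i,j,m}=e_{i,j,\hat m}$, $a_i^k|_{e_{i,j,m}}=a_j^{\hat k}$, $kB_{ij}+m=\hat kA_{ij}+\hat m$, $0\le\hat m<A_{ij}$, extended to paths by $g\cdot(e\nu)=(g\cdot e)(g|_e\cdot\nu)$, $g|_{e\nu}=(g|_e)|_\nu$. Contraction coefficient: for a finitely generated groupoid $G$ with finite symmetric generating set $S$ and word length $\ell_S$, acting via an action-restriction pair on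 a finite graph $E$, $\rho=\limsup_{n\to\infty}\left(\limsup_{g\in G,\ \ell_S(g)\to\infty}\max_{\mu\in d(g)E^n}\frac{\ell_S(g|_\mu)}{\ell_S(g)}\right)^{1/n}$ (it does not depend on $S$). For $\mathbb{Z}\times E_A^0$ one may take $S=\{a_i^{\pm1}\}$, so $\ell_S(a_i^k)=|k|$, and $\rho=\limsup_n\left(\limsup_{m\to\infty}\max_{\mu\in E_A^n}\frac{\ell_S(a^m_{r(\mu)}|_\mu)}{m}\right)^{1/n}$. *)

theory Defs
  imports "HOL-Analysis.Analysis"
begin

text \<open>Vertices of E_A are 0..N-1 (0-indexed). An edge e_{i,j,m} is the triple (i,j,m)
  with range r = i and source s = j.\<close>

type_synonym edge = "nat \<times> nat \<times> nat"

definition erng :: "edge \<Rightarrow> nat" where "erng e = fst e"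
definition esrc :: "edge \<Rightarrow> nat" where "esrc e = fst (snd e)"
definition eidx :: "edge \<Rightarrow> nat" where "eidx e = snd (snd e)"

definition katsura_pair :: "nat \<Rightarrow> (nat \<Rightarrow> nat \<Rightarrow> nat) \<Rightarrow> (nat \<Rightarrow> nat \<Rightarrow> int) \<Rightarrow> bool" where
  "katsura_pair N A B \<longleftrightarrow> (\<forall>i<N. \<forall>j<N. A i j = 0 \<longrightarrow> B i j = 0)"

definition no_zero_rows :: "nat \<Rightarrow> (nat \<Rightarrow> nat \<Rightarrow> nat) \<Rightarrow> bool" where
  "no_zero_rows N A \<longleftrightarrow> (\<forall>i<N. \<exists>j<N. A i j \<noteq> 0)"

definition edges :: "nat \<Rightarrow> (nat \<Rightarrow> nat \<Rightarrow> nat) \<Rightarrow> edge set" where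
  "edges N A = {(i, j, m). i < N \<and> j < N \<and> m < A i j}"

definition paths :: "nat \<Rightarrow> (nat \<Rightarrow> nat \<Rightarrow> nat) \<Rightarrow> nat \<Rightarrow> edge list set" where
  "paths N A n = {\<mu>. length \<mu> = n \<and> set \<mu> \<subseteq> edges N A \<and>
       (\<forall>t. Suc t < n \<longrightarrow> esrc (\<mu> ! t) = erng (\<mu> ! Suc t))}"

definition A_path :: "(nat \<Rightarrow> nat \<Rightarrow> nat) \<Rightarrow> edge list \<Rightarrow> nat" where
  "A_path A \<mu> = prod_list (map (\<lambda>e. A (erng e) (esrc e)) \<mu>)"

definition B_path :: "(nat \<Rightarrow> nat \<Rightarrow> int) \<Rightarrow> edge list \<Rightarrow> int" where
  "B_path B \<mu> = prod_list (map (\<lambda>e. B (erng e) (esrc e)) \<mu>)"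

text \<open>Restriction a_i^k |_{e_{i,j,m}} = a_j^{khat} where k B_ij + m = khat A_ij + mhat,
  0 <= mhat < A_ij, i.e. khat = floor((k B_ij + m) / A_ij).\<close>
definition restr_edge :: "(nat \<Rightarrow> nat \<Rightarrow> nat) \<Rightarrow> (nat \<Rightarrow> nat \<Rightarrow> int) \<Rightarrow> int \<Rightarrow> edge \<Rightarrow> int" where
  "restr_edge A B k e = (k * B (erng e) (esrc e) + int (eidx e)) div int (A (erng e) (esrc e))"

text \<open>g|_{e nu} = (g|_e)|_nu; the exponent of a_{r(mu)}^k |_mu.\<close>
definition restr_path :: "(nat \<Rightarrow> nat \<Rightarrow> nat) \<Rightarrow> (nat \<Rightarrow> nat \<Rightarrow> int) \<Rightarrow> int \<Rightarrow> edge list \<Rightarrow> int" where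
  "restr_path A B k \<mu> = foldl (restr_edge A B) k \<mu>"

definition eroot :: "nat \<Rightarrow> ereal \<Rightarrow> ereal" where
  "eroot n x = (if x = \<infinity> then \<infinity> else ereal (real_of_ereal x powr (1 / real n)))"

text \<open>Contraction coefficient, with S = {a_i^{+-1}}, word length |k|:
  limsup_n ( limsup_{|k| \<rightarrow> \<infinity>} max_{mu in E^n} |k'| / |k| )^{1/n}, where the max ranges over
  all g = a_i^k with word length |k| (all vertices i) and all mu in d(g) E^n.\<close>
definition contraction_coeff :: "nat \<Rightarrow> (nat \<Rightarrow> nat \<Rightarrow> nat) \<Rightarrow> (nat \<Rightarrow> nat \<Rightarrow> int) \<Rightarrow> ereal" where
  "contraction_coeff N A B =
     limsup (\<lambda>n. eroot n
       (Limsup (sup at_top at_bot)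
          (\<lambda>k::int. ereal (Max ((\<lambda>\<mu>. real_of_int \<bar>restr_path A B k \<mu>\<bar> / real_of_int \<bar>k\<bar>) ` paths N A n)))))"

end

theory Submission
  imports Defs
begin

text \<open>Restricting a_i^k along an edge e_{i,j,m} replaces k by the floor of
  (k B_ij + m) / A_ij, which differs from k B_ij / A_ij by less than 1. Along a fixed
  path mu these errors are rescaled by bounded factors, so the exponent of a^k|_mu stays
  within a bounded distance of k B_mu / A_mu. Hence, for each path, the quotient
  |k'| / |k| converges to |B_mu| / A_mu as |k| tends to infinity; the maximum over the
  finite set E_A^n commutes with this limit, so the inner limsup in the contraction
  coefficient is exactly max |B_mu| / A_mu.\<close>

definition path_ratio :: "(nat \<Rightarrow> nat \<Rightarrow> nat) \<Rightarrow> (nat \<Rightarrow> nat \<Rightarrow> int) \<Rightarrow> edge list \<Rightarrow> real" where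
  "path_ratio A B \<mu> = real_of_int (B_path B \<mu>) / real (A_path A \<mu>)"

lemma path_ratio_Cons:
  "path_ratio A B (e # \<mu>) = real_of_int (B (erng e) (esrc e)) / real (A (erng e) (esrc e)) * path_ratio A B \<mu>"
  by (simp add: path_ratio_def A_path_def B_path_def)

lemma restr_path_Cons: "restr_path A B k (e # \<mu>) = restr_path A B (restr_edge A B k e) \<mu>"
  by (simp add: restr_path_def)

lemma edges_eq_Sigma: "edges N A = (SIGMA i:{..<N}. SIGMA j:{..<N}. {..<A i j})"
  by (auto simp: edges_def)

lemma finite_edges: "finite (edges N A)"
  by (simp add: edges_eq_Sigma)

lemma finite_paths: "finite (paths N A n)"
proof (rule finite_subset)
  show "paths N A n \<subseteq> {\<mu>. set \<mu> \<subseteq> edges N A \<and> length \<mu> = n}"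
    by (auto simp: paths_def)
qed (rule finite_lists_length_eq[OF finite_edges])

lemma restr_edge_approx:
  assumes "e \<in> edges N A"
  shows "\<bar>real_of_int (restr_edge A B k e) - real_of_int k * real_of_int (B (erng e) (esrc e)) / real (A (erng e) (esrc e))\<bar> < 1"
proof -
  define a b m where "a = A (erng e) (esrc e)" and "b = B (erng e) (esrc e)" and "m = eidx e"
  have "m < a"
    using assms by (auto simp: edges_def a_def m_def erng_def esrc_def eidx_def)
  define x where "x = real_of_int k * real_of_int b / real a"
  have restr: "restr_edge A B k e = \<lfloor>x + real m / real a\<rfloor>"
    using \<open>m < a\<close> floor_divide_of_int_eq[where 'a=real, of "k * b + int m" "int a"]
    by (simp add: restr_edge_def a_def b_def m_def x_def add_divide_distrib)
  have "0 \<le> real m / real a" "real m / real a < 1"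
    using \<open>m < a\<close> by auto
  then have "\<bar>real_of_int \<lfloor>x + real m / real a\<rfloor> - x\<bar> < 1"
    by linarith
  then show ?thesis
    by (simp add: restr x_def a_def b_def)
qed

lemma restr_path_approx:
  assumes "set \<mu> \<subseteq> edges N A"
  shows "\<exists>C. \<forall>k. \<bar>real_of_int (restr_path A B k \<mu>) - real_of_int k * path_ratio A B \<mu>\<bar> \<le> C"
  using assms
proof (induction \<mu>)
  case Nil
  show ?case
    by (rule exI[of _ 0]) (simp add: restr_path_def path_ratio_def A_path_def B_path_def)
next
  case (Cons e \<mu>)
  then obtain C where C: "\<And>k. \<bar>real_of_int (restr_path A B k \<mu>) - real_of_int k * path_ratio A B \<mu>\<bar> \<le> C"
    by auto
  let ?r = "path_ratio A B \<mu>" and ?q = "real_of_int (B (erng e) (esrc e)) / real (A (erng e) (esrc e))"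
  have "\<bar>real_of_int (restr_path A B k (e # \<mu>)) - real_of_int k * path_ratio A B (e # \<mu>)\<bar> \<le> C + \<bar>?r\<bar>" for k
  proof -
    define k' where "k' = restr_edge A B k e"
    have "\<bar>real_of_int k' - real_of_int k * ?q\<bar> \<le> 1"
      using restr_edge_approx[of e N A B k] Cons.prems by (simp add: k'_def times_divide_eq_right)
    then have "\<bar>real_of_int k' - real_of_int k * ?q\<bar> * \<bar>?r\<bar> \<le> \<bar>?r\<bar>"
      by (rule mult_left_le_one_le[OF abs_ge_zero abs_ge_zero])
    then have "\<bar>real_of_int k' * ?r - real_of_int k * ?q * ?r\<bar> \<le> \<bar>?r\<bar>"
      by (simp only: abs_mult[symmetric] left_diff_distrib)
    moreover have "\<bar>real_of_int (restr_path A B k' \<mu>) - real_of_int k' * ?r\<bar> \<le> C"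
      by (rule C)
    moreover have "restr_path A B k (e # \<mu>) = restr_path A B k' \<mu>"
      unfolding k'_def by (rule restr_path_Cons)
    moreover have "real_of_int k * path_ratio A B (e # \<mu>) = real_of_int k * ?q * ?r"
      unfolding path_ratio_Cons by (rule mult.assoc[symmetric])
    ultimately show ?thesis
      by linarith
  qed
  then show ?case
    by blast
qed

lemma filterlim_abs_int_at_top: "filterlim (\<lambda>k::int. real_of_int \<bar>k\<bar>) at_top (sup at_top at_bot)"
  unfolding filterlim_at_top eventually_sup eventually_at_top_linorder eventually_at_bot_linorder
proof (intro allI conjI)
  fix Z :: real
  show "\<exists>N. \<forall>k\<ge>N. Z \<le> real_of_int \<bar>k\<bar>"
    using le_of_int_ceiling[of Z] by (intro exI[of _ "\<lceil>Z\<rceil>"] allI impI) linarith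
  show "\<exists>N. \<forall>k\<le>N. Z \<le> real_of_int \<bar>k\<bar>"
    using le_of_int_ceiling[of Z] by (intro exI[of _ "- \<lceil>Z\<rceil>"] allI impI) linarith
qed

lemma tendsto_abs_divide_abs_of_bounded_deviation:
  fixes f :: "int \<Rightarrow> real"
  assumes "\<And>k. \<bar>f k - real_of_int k * r\<bar> \<le> C"
  shows "((\<lambda>k. \<bar>f k\<bar> / real_of_int \<bar>k\<bar>) \<longlongrightarrow> \<bar>r\<bar>) (sup at_top at_bot)"
proof -
  have "eventually (\<lambda>k::int. k \<noteq> 0) (sup at_top at_bot)"
    unfolding eventually_sup eventually_at_top_linorder eventually_at_bot_linorder
    by (intro conjI exI[of _ 1] exI[of _ "-1"]) auto
  then have "eventually (\<lambda>k. norm (\<bar>f k\<bar> / real_of_int \<bar>k\<bar> - \<bar>r\<bar>) \<le> C / real_of_int \<bar>k\<bar>) (sup at_top at_bot)"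
  proof eventually_elim
    case (elim k)
    have "\<bar>f k\<bar> / real_of_int \<bar>k\<bar> - \<bar>r\<bar> = (\<bar>f k\<bar> - \<bar>real_of_int k * r\<bar>) / real_of_int \<bar>k\<bar>"
      using elim by (simp add: diff_divide_distrib abs_mult)
    moreover have "\<bar>\<bar>f k\<bar> - \<bar>real_of_int k * r\<bar>\<bar> \<le> C"
      using assms[of k] by linarith
    ultimately show ?case
      by (simp add: abs_divide divide_right_mono)
  qed
  moreover have "((\<lambda>k. C / real_of_int \<bar>k\<bar>) \<longlongrightarrow> 0) (sup at_top at_bot)"
    using filterlim_at_top_imp_at_infinity[OF filterlim_abs_int_at_top]
    by (rule tendsto_divide_0[OF tendsto_const])
  ultimately have "((\<lambda>k. \<bar>f k\<bar> / real_of_int \<bar>k\<bar> - \<bar>r\<bar>) \<longlongrightarrow> 0) (sup at_top at_bot)"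
    by (rule Lim_null_comparison)
  then show ?thesis
    by (rule LIM_zero_cancel)
qed

lemma restr_path_quotient_tendsto:
  assumes "set \<mu> \<subseteq> edges N A"
  shows "((\<lambda>k. real_of_int \<bar>restr_path A B k \<mu>\<bar> / real_of_int \<bar>k\<bar>)
           \<longlongrightarrow> real_of_int \<bar>B_path B \<mu>\<bar> / real (A_path A \<mu>)) (sup at_top at_bot)"
proof -
  obtain C where "\<And>k. \<bar>real_of_int (restr_path A B k \<mu>) - real_of_int k * path_ratio A B \<mu>\<bar> \<le> C"
    using restr_path_approx[OF assms] by blast
  then have "((\<lambda>k. real_of_int \<bar>restr_path A B k \<mu>\<bar> / real_of_int \<bar>k\<bar>) \<longlongrightarrow> \<bar>path_ratio A B \<mu>\<bar>) (sup at_top at_bot)"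
    using tendsto_abs_divide_abs_of_bounded_deviation by fastforce
  then show ?thesis
    by (simp add: path_ratio_def abs_divide)
qed

lemma Max_restr_path_quotient_tendsto:
  "((\<lambda>k. Max ((\<lambda>\<mu>. real_of_int \<bar>restr_path A B k \<mu>\<bar> / real_of_int \<bar>k\<bar>) ` paths N A n))
     \<longlongrightarrow> Max ((\<lambda>\<mu>. real_of_int \<bar>B_path B \<mu>\<bar> / real (A_path A \<mu>)) ` paths N A n)) (sup at_top at_bot)"
proof (cases "paths N A n = {}")
  case False
  have "((\<lambda>k. Sup ((\<lambda>\<mu>. real_of_int \<bar>restr_path A B k \<mu>\<bar> / real_of_int \<bar>k\<bar>) ` paths N A n))
     \<longlongrightarrow> Sup ((\<lambda>\<mu>. real_of_int \<bar>B_path B \<mu>\<bar> / real (A_path A \<mu>)) ` paths N A n)) (sup at_top at_bot)"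
    by (intro tendsto_Sup finite_paths restr_path_quotient_tendsto) (auto simp: paths_def)
  then show ?thesis
    using False by (simp add: cSup_eq_Max finite_paths)
qed simp

lemma Limsup_Max_restr_path_quotient:
  "Limsup (sup at_top at_bot)
     (\<lambda>k. ereal (Max ((\<lambda>\<mu>. real_of_int \<bar>restr_path A B k \<mu>\<bar> / real_of_int \<bar>k\<bar>) ` paths N A n)))
   = ereal (Max ((\<lambda>\<mu>. real_of_int \<bar>B_path B \<mu>\<bar> / real (A_path A \<mu>)) ` paths N A n))"
proof (rule lim_imp_Limsup)
  show "sup at_top at_bot \<noteq> (bot :: int filter)"
    by (simp add: sup_eq_bot_iff)
qed (rule tendsto_ereal[OF Max_restr_path_quotient_tendsto])

text \<open>The hypotheses on N, A and B are not needed: restrictions are only taken along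
  actual edges, where A_ij > 0, and for empty E_A^n both sides involve the same junk
  value Max {}.\<close>

theorem proposition3p4:
  fixes N :: nat and A :: "nat \<Rightarrow> nat \<Rightarrow> nat" and B :: "nat \<Rightarrow> nat \<Rightarrow> int"
  assumes "0 < N"
    and "katsura_pair N A B"
    and "no_zero_rows N A"
  shows "contraction_coeff N A B =
    limsup (\<lambda>n. ereal ((Max ((\<lambda>\<mu>. real_of_int \<bar>B_path B \<mu>\<bar> / real (A_path A \<mu>)) ` paths N A n))
                         powr (1 / real n)))"
  unfolding contraction_coeff_def Limsup_Max_restr_path_quotient eroot_def by simp

end
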